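(* Let $N\ge1$ be an integer and $a,b$ complex numbers such that all denominators below are nonzero. Then \[ B^{[N]}(a,b)=\frac{1}{N}\sum_{n=0}^N \frac{(1+n)_{N-n}}{(a+n)_{N-n}}\,\frac{(1+N-n)_n}{(b+N-n)_n}, \] where $B^{[N]}(a,b)=\dfrac{(a+b)_N\,(N-1)!}{(a)_N\,(b)_N}$.
   Context: $(x)_m=x(x+1)\cdots(x+m-1)$ denotes the rising factorial, with $(x)_0=1$. The truncated beta function is $B^{[N]}(a,b)=\frac{a+b}{ab}\prod_{n=1}^{N-1}\frac{(a+b+n)n}{(a+n)(b+n)}=\frac{(a+b)_N(N-1)!}{(a)_N(b)_N}$. *)

theory Defs
  imports Complex_Main
begin

definition trunc_beta :: "nat \<Rightarrow> complex \<Rightarrow> complex \<Rightarrow> complex" where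
  "trunc_beta N a b = pochhammer (a + b) N * of_nat (fact (N - 1)) / (pochhammer a N * pochhammer b N)"

end

theory Submission
  imports Defs
begin

text \<open>After writing each Pochhammer quotient as a quotient of full products, the
  n-th summand becomes N!/((a)_N (b)_N) times the n-th term of the Chu-Vandermonde
  expansion of (a+b)_N; summing and using N! = N (N-1)! gives the claim.\<close>

lemma pochhammer_shift_eq_divide:
  fixes z :: "'a :: field"
  assumes "m \<le> n" and "pochhammer z m \<noteq> 0"
  shows "pochhammer (z + of_nat m) (n - m) = pochhammer z n / pochhammer z m"
  using pochhammer_product[OF assms(1), of z] assms(2) by simp

lemma pochhammer_one_shift_eq_fact_divide:
  assumes "m \<le> n"
  shows "pochhammer (1 + of_nat m :: 'a :: field_char_0) (n - m) = fact n / fact m"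
  unfolding pochhammer_fact
  by (rule pochhammer_shift_eq_divide[OF assms]) (simp add: pochhammer_fact[symmetric])

lemma pochhammer_ratio_product_eq_binomial_term:
  fixes a b :: "'a :: field_char_0"
  assumes "k \<le> n" and a: "pochhammer a n \<noteq> 0" and b: "pochhammer b n \<noteq> 0"
  shows "pochhammer (1 + of_nat k) (n - k) / pochhammer (a + of_nat k) (n - k)
      * (pochhammer (1 + of_nat (n - k)) k / pochhammer (b + of_nat (n - k)) k)
    = fact n / (pochhammer a n * pochhammer b n)
      * (of_nat (n choose k) * pochhammer a k * pochhammer b (n - k))"
proof -
  have a_split: "pochhammer a n = pochhammer a k * pochhammer (a + of_nat k) (n - k)"
    using pochhammer_product[OF assms(1)] .
  have b_split: "pochhammer b n = pochhammer b (n - k) * pochhammer (b + of_nat (n - k)) k"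
    using pochhammer_product[of "n - k" n b] assms(1) by simp
  have "pochhammer a k \<noteq> 0" "pochhammer (a + of_nat k) (n - k) \<noteq> 0"
    using a a_split by auto
  moreover have "pochhammer b (n - k) \<noteq> 0" "pochhammer (b + of_nat (n - k)) k \<noteq> 0"
    using b b_split by auto
  moreover have "pochhammer (1 + of_nat (n - k) :: 'a) k = fact n / fact (n - k)"
    using pochhammer_one_shift_eq_fact_divide[of "n - k" n] assms(1) by simp
  ultimately show ?thesis
    unfolding pochhammer_one_shift_eq_fact_divide[OF assms(1)] a_split b_split
      binomial_fact[OF assms(1)]
    by (simp add: field_simps)
qed

lemma sum_pochhammer_ratio_products:
  fixes a b :: "'a :: field_char_0"
  assumes "pochhammer a n \<noteq> 0" and "pochhammer b n \<noteq> 0"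
  shows "(\<Sum>k\<le>n. pochhammer (1 + of_nat k) (n - k) / pochhammer (a + of_nat k) (n - k)
      * (pochhammer (1 + of_nat (n - k)) k / pochhammer (b + of_nat (n - k)) k))
    = fact n * pochhammer (a + b) n / (pochhammer a n * pochhammer b n)"
proof -
  have "(\<Sum>k\<le>n. pochhammer (1 + of_nat k) (n - k) / pochhammer (a + of_nat k) (n - k)
      * (pochhammer (1 + of_nat (n - k)) k / pochhammer (b + of_nat (n - k)) k))
    = (\<Sum>k\<le>n. fact n / (pochhammer a n * pochhammer b n)
      * (of_nat (n choose k) * pochhammer a k * pochhammer b (n - k)))"
    using assms by (intro sum.cong refl pochhammer_ratio_product_eq_binomial_term) auto
  also have "\<dots> = fact n / (pochhammer a n * pochhammer b n) * pochhammer (a + b) n"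
    by (simp only: sum_distrib_left[symmetric] pochhammer_binomial_sum)
  finally show ?thesis by simp
qed

theorem proposition2p1:
  fixes N :: nat and a b :: complex
  assumes "N \<ge> 1"
    and "pochhammer a N \<noteq> 0" and "pochhammer b N \<noteq> 0"
    and "\<And>n. n \<le> N \<Longrightarrow> pochhammer (a + of_nat n) (N - n) \<noteq> 0"
    and "\<And>n. n \<le> N \<Longrightarrow> pochhammer (b + of_nat (N - n)) n \<noteq> 0"
  shows "trunc_beta N a b =
    (1 / of_nat N) * (\<Sum>n = 0..N.
        pochhammer (1 + of_nat n) (N - n) / pochhammer (a + of_nat n) (N - n)
      * (pochhammer (1 + of_nat (N - n)) n / pochhammer (b + of_nat (N - n)) n))"
proof -
  have "fact N = (of_nat N * of_nat (fact (N - 1)) :: complex)"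
    using assms(1) by (cases N) (auto simp: fact_Suc)
  then show ?thesis
    using assms(1) sum_pochhammer_ratio_products[OF assms(2,3)]
    by (simp add: trunc_beta_def atLeast0AtMost)
qed

end
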